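(* Let $G\in\mathfrak{M}$, $\phi=\phi_G$, and let $\phi^c(x)=\inf_{y\in\mathbb{R}^2}(c(x,y)-\phi(y))$, $x\in\mathbb{R}^2$. Then $\phi$ and $\phi^c$ take values in $[-\infty,0]$, $\phi^c\le\phi$, and $$G=\{y\in\mathbb{R}^2:\phi(y)=0\}=\{x\in\mathbb{R}^2:\phi^c(x)=0\}.$$
   Context: $c(x,y)=(x_1-y_1)(x_2-y_2)$ for $x,y\in\mathbb{R}^2$. $\mathfrak{M}$: family of maximal monotone sets $G\subset\mathbb{R}^2$ (monotone: $c(r,s)\ge0$ for all $r,s\in G$; maximal: not a proper subset of a monotone set). $\phi_G(y)=\inf_{x\in G}c(x,y)$. *)

theory Defs
  imports "HOL-Analysis.Analysis" "HOL-Library.Extended_Real"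
begin

definition cost :: "real \<times> real \<Rightarrow> real \<times> real \<Rightarrow> real" where
  "cost x y = (fst x - fst y) * (snd x - snd y)"

definition monotone_set :: "(real \<times> real) set \<Rightarrow> bool" where
  "monotone_set G \<longleftrightarrow> (\<forall>r\<in>G. \<forall>s\<in>G. cost r s \<ge> 0)"

definition maximal_monotone :: "(real \<times> real) set \<Rightarrow> bool" where
  "maximal_monotone G \<longleftrightarrow> monotone_set G \<and>
     (\<forall>H. monotone_set H \<and> G \<subseteq> H \<longrightarrow> H = G)"

definition phi :: "(real \<times> real) set \<Rightarrow> real \<times> real \<Rightarrow> ereal" where
  "phi G y = (INF x\<in>G. ereal (cost x y))"

definition phi_c :: "(real \<times> real) set \<Rightarrow> real \<times> real \<Rightarrow> ereal" where
  "phi_c G x = (INF y. ereal (cost x y) - phi G y)"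

end

theory Submission
  imports Defs
begin

text \<open>Monotonicity makes \<open>\<phi>\<^sub>G\<close> vanish on \<open>G\<close>, and maximality makes it negative off \<open>G\<close>:
  a point with \<open>c(x, y) \<ge> 0\<close> for all \<open>x \<in> G\<close> could be added to \<open>G\<close>. Since \<open>\<phi>\<^sub>G = 0\<close> on \<open>G\<close>,
  taking \<open>y \<in> G\<close> in the infimum defining \<open>\<phi>\<^sup>c\<close> gives \<open>\<phi>\<^sup>c \<le> \<phi>\<^sub>G\<close>, while \<open>\<phi>\<^sub>G(y) \<le> c(x, y)\<close>
  for \<open>x \<in> G\<close> gives \<open>\<phi>\<^sup>c \<ge> 0\<close> on \<open>G\<close>.\<close>

lemma cost_commute: "cost x y = cost y x"
  unfolding cost_def by (simp add: algebra_simps)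

lemma cost_self [simp]: "cost x x = 0"
  unfolding cost_def by simp

lemma phi_le_cost: "x \<in> G \<Longrightarrow> phi G y \<le> ereal (cost x y)"
  unfolding phi_def by (rule INF_lower)

lemma maximal_monotone_not_mem_imp_neg_cost:
  assumes "maximal_monotone G" "y \<notin> G"
  obtains x where "x \<in> G" "cost x y < 0"
proof (rule ccontr)
  assume "\<not> thesis"
  then have "\<forall>x\<in>G. 0 \<le> cost x y"
    using that by (meson not_le)
  then have "monotone_set (insert y G)"
    using assms(1) unfolding maximal_monotone_def monotone_set_def
    by (auto simp: cost_commute[of y])
  then have "insert y G = G"
    using assms(1) unfolding maximal_monotone_def by blast
  with assms(2) show False by blast
qed

lemma monotone_set_phi_eq_0:
  assumes "monotone_set G" "y \<in> G"
  shows "phi G y = 0"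
proof (rule antisym)
  show "phi G y \<le> 0"
    using phi_le_cost[OF assms(2), of y] by (simp add: zero_ereal_def)
  show "0 \<le> phi G y"
    using assms unfolding phi_def monotone_set_def by (auto intro!: INF_greatest)
qed

lemma maximal_monotone_phi_neg:
  assumes "maximal_monotone G" "y \<notin> G"
  shows "phi G y < 0"
proof -
  obtain x where "x \<in> G" "cost x y < 0"
    using maximal_monotone_not_mem_imp_neg_cost[OF assms] .
  then have "phi G y \<le> ereal (cost x y)" "ereal (cost x y) < 0"
    by (simp_all add: phi_le_cost)
  then show ?thesis
    by (rule le_less_trans)
qed

lemma maximal_monotone_phi_eq_0_iff:
  assumes "maximal_monotone G"
  shows "phi G y = 0 \<longleftrightarrow> y \<in> G"
proof
  show "y \<in> G \<Longrightarrow> phi G y = 0"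
    using assms monotone_set_phi_eq_0 unfolding maximal_monotone_def by blast
  show "phi G y = 0 \<Longrightarrow> y \<in> G"
    using maximal_monotone_phi_neg[OF assms, of y] by (metis order_less_irrefl)
qed

lemma maximal_monotone_phi_nonpos:
  assumes "maximal_monotone G"
  shows "phi G y \<le> 0"
proof (cases "y \<in> G")
  case True
  then show ?thesis
    using maximal_monotone_phi_eq_0_iff[OF assms] by (metis order_refl)
next
  case False
  then show ?thesis
    using maximal_monotone_phi_neg[OF assms] by (simp add: less_imp_le)
qed

lemma monotone_set_phi_c_le_phi:
  assumes "monotone_set G"
  shows "phi_c G x \<le> phi G x"
  unfolding phi_def
proof (rule INF_greatest)
  fix z assume "z \<in> G"
  have "phi_c G x \<le> ereal (cost x z) - phi G z"
    unfolding phi_c_def by (rule INF_lower) simp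
  also have "\<dots> = ereal (cost z x)"
    using monotone_set_phi_eq_0[OF assms \<open>z \<in> G\<close>] by (simp add: cost_commute)
  finally show "phi_c G x \<le> ereal (cost z x)" .
qed

lemma phi_c_nonneg: "x \<in> G \<Longrightarrow> 0 \<le> phi_c G x"
  unfolding phi_c_def
proof (rule INF_greatest)
  fix y assume "x \<in> G"
  then have "phi G y \<le> ereal (cost x y)" by (rule phi_le_cost)
  then show "0 \<le> ereal (cost x y) - phi G y"
    by (cases "phi G y") auto
qed

theorem lemma16:
  assumes "maximal_monotone G"
  shows "(\<forall>y. phi G y \<le> 0) \<and> (\<forall>x. phi_c G x \<le> 0) \<and> (\<forall>x. phi_c G x \<le> phi G x)
         \<and> G = {y. phi G y = 0} \<and> G = {x. phi_c G x = 0}"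
proof -
  have mono: "monotone_set G"
    using assms unfolding maximal_monotone_def by blast
  note phi_nonpos = maximal_monotone_phi_nonpos[OF assms]
  note phi_c_le = monotone_set_phi_c_le_phi[OF mono]
  have phi_c_nonpos: "phi_c G x \<le> 0" for x
    using phi_c_le phi_nonpos order_trans by blast
  have phi_c_eq_0_iff: "phi_c G x = 0 \<longleftrightarrow> x \<in> G" for x
  proof
    assume "phi_c G x = 0"
    then have "phi G x = 0"
      using phi_c_le[of x] phi_nonpos[of x] by simp
    then show "x \<in> G"
      using maximal_monotone_phi_eq_0_iff[OF assms] by blast
  next
    assume "x \<in> G"
    then show "phi_c G x = 0"
      using phi_c_nonneg[of x G] phi_c_nonpos[of x] by simp
  qed
  show ?thesis
    using phi_nonpos phi_c_nonpos phi_c_le phi_c_eq_0_iff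
      maximal_monotone_phi_eq_0_iff[OF assms] by blast
qed

end
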